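(* Assume $x(0)=x'(0)=0$. Let $L_1(t,s)=\omega\sin(\omega(t-s))+\cos(\omega(t-s))$ and $L_2(t,s)=\omega^2\cos(\omega(t-s))-\omega\sin(\omega(t-s))$. The following are equivalent: (A) $y_1(t)\to0$ as $t\to\infty$, $\lim_{t\to\infty}\int_0^tE(t,s)L_1(t,s)y_1(s)\,ds=0$ and $\lim_{t\to\infty}\int_0^tE(t,s)L_2(t,s)y_1(s)\,ds=0$; (B) $x(t)\to0$ and $x'(t)\to0$ as $t\to\infty$.
   Context: Standing assumptions: $\omega>0$ is a constant; $p\in C^1([0,\infty))$ with $p(t)>0$ and $p'(t)<0$ for all $t\ge0$, $\int_0^\infty p(t)\,dt=\infty$ and $\int_0^\infty p(t)^2\,dt<\infty$; $f\in L^1_{\mathrm{loc}}([0,\infty))$. $x$ denotes the solution of $x''(t)+p(t)x'(t)+\omega^2x(t)=f(t)$, $t\ge0$. Notation: $E(t,s)=\exp(-\frac12\int_s^tp(\tau)\,d\tau)$ for $0\le s\le t$; $y_1(t)=\int_0^te^{-\omega^2(t-s)}f(s)\,ds$. *)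

theory Defs
  imports "HOL-Analysis.Analysis"
begin

definition Efun :: "(real \<Rightarrow> real) \<Rightarrow> real \<Rightarrow> real \<Rightarrow> real" where
  "Efun p t s = exp (- (1/2) * integral {s..t} p)"

definition y1 :: "real \<Rightarrow> (real \<Rightarrow> real) \<Rightarrow> real \<Rightarrow> real" where
  "y1 \<omega> f t = integral {0..t} (\<lambda>s. exp (- (\<omega>^2) * (t - s)) * f s)"

definition L1 :: "real \<Rightarrow> real \<Rightarrow> real \<Rightarrow> real" where
  "L1 \<omega> t s = \<omega> * sin (\<omega> * (t - s)) + cos (\<omega> * (t - s))"

definition L2 :: "real \<Rightarrow> real \<Rightarrow> real \<Rightarrow> real" where
  "L2 \<omega> t s = \<omega>^2 * cos (\<omega> * (t - s)) - \<omega> * sin (\<omega> * (t - s))"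

end

theory Submission
  imports Defs
begin

text \<open>Testing the equation \<open>x'' + p x' + \<omega>\<^sup>2 x = f\<close> against a kernel \<open>k(s)\<close> on \<open>[0,t]\<close>
  and integrating by parts twice (the first time against the merely integrable forcing) gives an
  exact identity for \<open>k x' - k' x + p k x\<close> at time \<open>t\<close>. The damped kernels
  \<open>E(t,s) sin(\<omega>(t-s))/\<omega>\<close> and \<open>E(t,s) cos(\<omega>(t-s))\<close> turn it into variation-of-constants formulas:
  \<open>x(t)\<close> and \<open>x'(t) + p(t) x(t)/2\<close> are the \<open>L\<^sub>1\<close>- and \<open>L\<^sub>2\<close>-integrals of \<open>y\<^sub>1\<close> plus
  remainders whose integrands are \<open>E p\<close> times \<open>y\<^sub>1\<close> or \<open>E q\<close> times \<open>x\<close>, where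
  \<open>q = p'/2 + p\<^sup>2/4\<close>. Since \<open>\<integral>\<^sub>0\<^sup>t E(t,s) p(s) ds \<le> 2\<close>, \<open>\<integral> |q| < \<infinity>\<close> (as \<open>p' < 0\<close> and
  \<open>p\<^sup>2\<close> is integrable) and \<open>E(t,s) \<rightarrow> 0\<close> for fixed \<open>s\<close> (as \<open>\<integral> p = \<infinity>\<close>), a Toeplitz argument
  makes these remainders vanish as soon as \<open>y\<^sub>1\<close>, respectively \<open>x\<close>, does. The kernel
  \<open>exp(-\<omega>\<^sup>2(t-s))\<close> expresses \<open>y\<^sub>1\<close> through \<open>x\<close> and \<open>x'\<close> in the same way, which gives (B) \<open>\<Longrightarrow>\<close> (A).
  Conversely, under (A), the function \<open>|x|\<close> satisfies a Volterra inequality with kernel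
  \<open>E |q|/\<omega>\<close> and vanishing forcing term, so it tends to \<open>0\<close>, and then so does \<open>x'\<close>.\<close>

section \<open>Integration by parts against an absolutely integrable function\<close>

lemma absolutely_integrable_continuous_mult:
  fixes h g :: "real \<Rightarrow> real"
  assumes "continuous_on {a..b} h" "g absolutely_integrable_on {a..b}"
  shows "(\<lambda>s. h s * g s) absolutely_integrable_on {a..b}"
  by (rule absolutely_integrable_bounded_measurable_product_real)
     (auto intro: assms continuous_imp_measurable_on_sets_lebesgue compact_imp_bounded compact_continuous_image)

lemma increment_bound_imp_constant:
  fixes \<Phi> J :: "real \<Rightarrow> real"
  assumes "a \<le> b" and J: "continuous_on {a..b} J"
    and bound: "\<And>u v. a \<le> u \<Longrightarrow> u \<le> v \<Longrightarrow> v \<le> b \<Longrightarrow> \<bar>\<Phi> v - \<Phi> u\<bar> \<le> C * (v - u) * \<bar>J v - J u\<bar>"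
  shows "\<Phi> b = \<Phi> a"
proof -
  have "(\<Phi> has_field_derivative 0) (at u within {a..b})" if u: "u \<in> {a..b}" for u
  proof -
    have "((\<lambda>v. (\<Phi> v - \<Phi> u) / (v - u)) \<longlongrightarrow> 0) (at u within {a..b})"
    proof (rule Lim_null_comparison)
      show "\<forall>\<^sub>F v in at u within {a..b}. norm ((\<Phi> v - \<Phi> u) / (v - u)) \<le> C * \<bar>J v - J u\<bar>"
        unfolding eventually_at_filter
      proof (intro always_eventually allI impI)
        fix v assume v: "v \<noteq> u" "v \<in> {a..b}"
        have "\<bar>\<Phi> v - \<Phi> u\<bar> \<le> C * \<bar>v - u\<bar> * \<bar>J v - J u\<bar>"
          using bound[of u v] bound[of v u] u v by (cases "u \<le> v") (auto simp: abs_minus_commute)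
        then show "norm ((\<Phi> v - \<Phi> u) / (v - u)) \<le> C * \<bar>J v - J u\<bar>"
          using v by (simp add: divide_le_eq abs_minus_commute mult_ac)
      qed
      have "((\<lambda>v. J v - J u) \<longlongrightarrow> 0) (at u within {a..b})"
        using J u by (metis LIM_zero continuous_on_def)
      then show "((\<lambda>v. C * \<bar>J v - J u\<bar>) \<longlongrightarrow> 0) (at u within {a..b})"
        by (intro tendsto_mult_right_zero tendsto_rabs_zero)
    qed
    then show ?thesis by (simp add: has_field_derivative_iff)
  qed
  then obtain c where "\<And>u. u \<in> {a..b} \<Longrightarrow> \<Phi> u = c"
    using has_field_derivative_zero_constant[OF convex_real_interval(5)] by blast
  then show ?thesis using \<open>a \<le> b\<close> by auto
qed

lemma abs_indefinite_integral_increment_le: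
  fixes g :: "real \<Rightarrow> real"
  assumes g: "g absolutely_integrable_on {a..b}" and "a \<le> u" "u \<le> s" "s \<le> v" "v \<le> b"
  shows "\<bar>integral {a..s} g - integral {a..u} g\<bar> \<le> integral {u..v} (\<lambda>r. \<bar>g r\<bar>)"
proof -
  have g': "g integrable_on {a..b}" "(\<lambda>r. \<bar>g r\<bar>) integrable_on {a..b}"
    using g by (auto simp: absolutely_integrable_on_def)
  have "integral {a..s} g = integral {a..u} g + integral {u..s} g"
    using Henstock_Kurzweil_Integration.integral_combine[of a u s g] integrable_on_subinterval[OF g'(1)] assms by simp
  moreover have "\<bar>integral {u..s} g\<bar> \<le> integral {u..s} (\<lambda>r. \<bar>g r\<bar>)"
    using integral_norm_bound_integral[of g "{u..s}" "\<lambda>r. \<bar>g r\<bar>"] integrable_on_subinterval[OF g'(1)]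
      integrable_on_subinterval[OF g'(2)] assms by auto
  moreover have "integral {u..s} (\<lambda>r. \<bar>g r\<bar>) \<le> integral {u..v} (\<lambda>r. \<bar>g r\<bar>)"
    by (rule integral_subset_le) (use integrable_on_subinterval[OF g'(2)] assms in auto)
  ultimately show ?thesis by simp
qed

lemma by_parts_increment_eq:
  fixes g h h' :: "real \<Rightarrow> real"
  assumes uv: "a \<le> u" "u \<le> v" "v \<le> b" and g: "g absolutely_integrable_on {a..b}"
    and h: "\<And>s. s \<in> {a..b} \<Longrightarrow> (h has_real_derivative h' s) (at s within {a..b})"
    and h': "continuous_on {a..b} h'"
  defines "G \<equiv> \<lambda>r. integral {a..r} g"
  shows "integral {u..v} (\<lambda>s. h s * g s) - (h v * G v - h u * G u) + integral {u..v} (\<lambda>r. h' r * G r)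
      = integral {u..v} (\<lambda>s. (h s - h v) * g s) + integral {u..v} (\<lambda>s. h' s * (G s - G u))"
proof -
  have guv: "g absolutely_integrable_on {u..v}"
    by (rule absolutely_integrable_on_subinterval[OF g]) (use uv in auto)
  then have gi: "g integrable_on {u..v}"
    by (simp add: absolutely_integrable_on_def)
  have hc: "continuous_on {u..v} h"
    by (rule continuous_on_subset[OF DERIV_continuous_on[OF h]]) (use uv in auto)
  have Gc: "continuous_on {u..v} G" unfolding G_def
    by (rule continuous_on_subset[OF indefinite_integral_continuous_1])
       (use g uv in \<open>auto simp: absolutely_integrable_on_def\<close>)
  have h'c: "continuous_on {u..v} h'" by (rule continuous_on_subset[OF h']) (use uv in auto)
  have hg: "(\<lambda>s. h s * g s) integrable_on {u..v}"
    using absolutely_integrable_continuous_mult[OF hc guv] by (simp add: absolutely_integrable_on_def)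
  have ftc: "(h' has_integral (h v - h u)) {u..v}"
    by (rule fundamental_theorem_of_calculus[OF uv(2)])
       (use uv in \<open>auto simp: has_real_derivative_iff_has_vector_derivative[symmetric]
          intro!: has_field_derivative_subset[OF h]\<close>)
  have Gv: "G v = G u + integral {u..v} g"
    unfolding G_def using Henstock_Kurzweil_Integration.integral_combine[of a u v g] uv
      integrable_on_subinterval[of g "{a..b}" a v] g by (auto simp: absolutely_integrable_on_def)
  have "integral {u..v} (\<lambda>s. (h s - h v) * g s) = integral {u..v} (\<lambda>s. h s * g s) - h v * integral {u..v} g"
    using integral_diff[OF hg integrable_on_mult_right[OF gi, of "h v"]] by (simp add: algebra_simps)
  moreover have "integral {u..v} (\<lambda>s. h' s * (G s - G u)) = integral {u..v} (\<lambda>r. h' r * G r) - G u * (h v - h u)"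
    using integral_diff[OF integrable_continuous_interval integrable_on_mult_left, of u v "\<lambda>r. h' r * G r" h' "G u"]
      h'c Gc ftc integral_unique[OF ftc] by (auto intro!: continuous_intros simp: algebra_simps)
  ultimately show ?thesis
    unfolding Gv by (simp add: algebra_simps)
qed

lemma by_parts_increment_bound:
  fixes g h h' :: "real \<Rightarrow> real"
  assumes uv: "a \<le> u" "u \<le> v" "v \<le> b" and g: "g absolutely_integrable_on {a..b}"
    and h: "\<And>s. s \<in> {a..b} \<Longrightarrow> (h has_real_derivative h' s) (at s within {a..b})"
    and h': "continuous_on {a..b} h'" and M: "\<And>s. s \<in> {a..b} \<Longrightarrow> \<bar>h' s\<bar> \<le> M"
  defines "G \<equiv> \<lambda>r. integral {a..r} g"
  shows "\<bar>integral {u..v} (\<lambda>s. h s * g s) - (h v * G v - h u * G u) + integral {u..v} (\<lambda>r. h' r * G r)\<bar>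
           \<le> 2 * M * (v - u) * integral {u..v} (\<lambda>s. \<bar>g s\<bar>)"
proof -
  have guv: "g absolutely_integrable_on {u..v}"
    by (rule absolutely_integrable_on_subinterval[OF g]) (use uv in auto)
  then have gi: "g integrable_on {u..v}" "(\<lambda>s. \<bar>g s\<bar>) integrable_on {u..v}"
    by (auto simp: absolutely_integrable_on_def)
  have hc: "continuous_on {u..v} h"
    by (rule continuous_on_subset[OF DERIV_continuous_on[OF h]]) (use uv in auto)
  have "norm (integral {u..v} (\<lambda>s. (h s - h v) * g s)) \<le> integral {u..v} (\<lambda>s. M * (v - u) * \<bar>g s\<bar>)"
  proof (rule integral_norm_bound_integral)
    show "(\<lambda>s. (h s - h v) * g s) integrable_on {u..v}"
      using absolutely_integrable_continuous_mult[OF _ guv, of "\<lambda>s. h s - h v"] hc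
      by (simp add: absolutely_integrable_on_def continuous_intros)
    fix s assume s: "s \<in> {u..v}"
    have "\<bar>h s - h v\<bar> \<le> M * \<bar>s - v\<bar>"
      using field_differentiable_bound[OF convex_real_interval(5) h, of M s v] M s uv by auto
    also have "\<dots> \<le> M * (v - u)"
      using s M[of u] uv by (intro mult_left_mono) auto
    finally show "norm ((h s - h v) * g s) \<le> M * (v - u) * \<bar>g s\<bar>"
      by (simp add: abs_mult mult_right_mono)
  qed (use gi(2) in \<open>rule integrable_on_mult_right\<close>)
  then have hv_bound: "\<bar>integral {u..v} (\<lambda>s. (h s - h v) * g s)\<bar> \<le> M * (v - u) * integral {u..v} (\<lambda>s. \<bar>g s\<bar>)"
    by simp
  have "norm (integral {u..v} (\<lambda>s. h' s * (G s - G u)))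
      \<le> integral {u..v} (\<lambda>_. M * integral {u..v} (\<lambda>s. \<bar>g s\<bar>))"
  proof (rule integral_norm_bound_integral)
    have "continuous_on {u..v} G" unfolding G_def
      by (rule continuous_on_subset[OF indefinite_integral_continuous_1])
         (use g uv in \<open>auto simp: absolutely_integrable_on_def\<close>)
    then show "(\<lambda>s. h' s * (G s - G u)) integrable_on {u..v}"
      by (intro integrable_continuous_interval continuous_intros continuous_on_subset[OF h']) (use uv in auto)
    fix s assume s: "s \<in> {u..v}"
    have "\<bar>G s - G u\<bar> \<le> integral {u..v} (\<lambda>s. \<bar>g s\<bar>)"
      unfolding G_def by (rule abs_indefinite_integral_increment_le[OF g]) (use s uv in auto)
    then show "norm (h' s * (G s - G u)) \<le> M * integral {u..v} (\<lambda>s. \<bar>g s\<bar>)"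
      using M[of s] s uv by (auto simp: abs_mult intro!: mult_mono)
  qed (rule integrable_const_ivl)
  then have Gu_bound: "\<bar>integral {u..v} (\<lambda>s. h' s * (G s - G u))\<bar> \<le> M * (v - u) * integral {u..v} (\<lambda>s. \<bar>g s\<bar>)"
    using uv by (simp add: mult_ac)
  have eq: "integral {u..v} (\<lambda>s. h s * g s) - (h v * G v - h u * G u) + integral {u..v} (\<lambda>r. h' r * G r)
      = integral {u..v} (\<lambda>s. (h s - h v) * g s) + integral {u..v} (\<lambda>s. h' s * (G s - G u))"
    unfolding G_def by (rule by_parts_increment_eq[OF uv g h h'])
  show ?thesis
    unfolding eq by (rule order.trans[OF abs_triangle_ineq]) (use hv_bound Gu_bound in linarith)
qed

lemma has_integral_by_parts_absolutely_integrable: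
  fixes g h h' :: "real \<Rightarrow> real"
  assumes "a \<le> b" and g: "g absolutely_integrable_on {a..b}"
    and h: "\<And>s. s \<in> {a..b} \<Longrightarrow> (h has_real_derivative h' s) (at s within {a..b})"
    and h': "continuous_on {a..b} h'"
  shows "((\<lambda>s. h s * g s) has_integral
           (h b * integral {a..b} g - integral {a..b} (\<lambda>r. h' r * integral {a..r} g))) {a..b}"
proof -
  define G where "G r = integral {a..r} g" for r
  define J where "J r = integral {a..r} (\<lambda>s. \<bar>g s\<bar>)" for r
  define \<Phi> where "\<Phi> u = integral {a..u} (\<lambda>s. h s * g s) - h u * G u + integral {a..u} (\<lambda>r. h' r * G r)" for u
  have gi: "g integrable_on {a..b}" "(\<lambda>s. \<bar>g s\<bar>) integrable_on {a..b}"
    using g by (auto simp: absolutely_integrable_on_def)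
  have hg: "(\<lambda>s. h s * g s) integrable_on {a..b}"
    using absolutely_integrable_continuous_mult[OF DERIV_continuous_on[OF h] g]
    by (simp add: absolutely_integrable_on_def)
  have h'G: "(\<lambda>r. h' r * G r) integrable_on {a..b}"
    unfolding G_def by (intro integrable_continuous_interval continuous_intros h' indefinite_integral_continuous_1 gi)
  obtain M where M: "\<And>s. s \<in> {a..b} \<Longrightarrow> \<bar>h' s\<bar> \<le> M"
    using compact_imp_bounded[OF compact_continuous_image[OF h' compact_Icc]] by (force simp: bounded_iff)
  have combine: "integral {a..v} F = integral {a..u} F + integral {u..v} F"
    if "F integrable_on {a..b}" "a \<le> u" "u \<le> v" "v \<le> b" for F :: "real \<Rightarrow> real" and u v
    using Henstock_Kurzweil_Integration.integral_combine[of a u v F] integrable_on_subinterval[OF that(1), of a v] that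
    by auto
  \<comment> \<open>\<open>G\<close> is only absolutely continuous, so instead of the product rule we show that the
     remainder \<open>\<Phi>\<close> is constant: its increments are \<open>O((v - u) \<integral>\<^sub>u\<^sup>v |g|)\<close>.\<close>
  have "\<Phi> b = \<Phi> a"
  proof (rule increment_bound_imp_constant[OF \<open>a \<le> b\<close>, of J _ "2 * M"])
    show "continuous_on {a..b} J"
      unfolding J_def by (rule indefinite_integral_continuous_1[OF gi(2)])
    fix u v assume uv: "a \<le> u" "u \<le> v" "v \<le> b"
    have "\<Phi> v - \<Phi> u = integral {u..v} (\<lambda>s. h s * g s) - (h v * G v - h u * G u) + integral {u..v} (\<lambda>r. h' r * G r)"
      unfolding \<Phi>_def using combine[OF hg uv] combine[OF h'G uv] by simp
    moreover have "J v - J u = integral {u..v} (\<lambda>s. \<bar>g s\<bar>)"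
      unfolding J_def using combine[OF gi(2) uv] by simp
    moreover have "0 \<le> integral {u..v} (\<lambda>s. \<bar>g s\<bar>)"
      using integral_nonneg[OF integrable_on_subinterval[OF gi(2)]] uv by auto
    ultimately show "\<bar>\<Phi> v - \<Phi> u\<bar> \<le> 2 * M * (v - u) * \<bar>J v - J u\<bar>"
      using by_parts_increment_bound[OF uv g h h' M] unfolding G_def by simp
  qed
  then have "integral {a..b} (\<lambda>s. h s * g s) = h b * G b - integral {a..b} (\<lambda>r. h' r * G r)"
    by (simp add: \<Phi>_def G_def)
  with hg show ?thesis
    unfolding G_def by (metis has_integral_integrable_integral)
qed

section \<open>Integrals against fading kernels\<close>

locale fading_kernel =
  fixes D :: "real \<Rightarrow> real \<Rightarrow> real"
  assumes nonneg: "\<And>t s. 0 \<le> s \<Longrightarrow> s \<le> t \<Longrightarrow> 0 \<le> D t s"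
    and le_one: "\<And>t s. 0 \<le> s \<Longrightarrow> s \<le> t \<Longrightarrow> D t s \<le> 1"
    and mono: "\<And>t s T. 0 \<le> s \<Longrightarrow> s \<le> T \<Longrightarrow> T \<le> t \<Longrightarrow> D t s \<le> D t T"
    and fades: "\<And>T. 0 \<le> T \<Longrightarrow> ((\<lambda>t. D t T) \<longlongrightarrow> 0) at_top"
    and continuous: "\<And>t. 0 \<le> t \<Longrightarrow> continuous_on {0..t} (D t)"
begin

lemma integral_split_le:
  fixes w u :: "real \<Rightarrow> real"
  assumes St: "0 \<le> S" "S \<le> t"
    and w: "\<And>s. 0 \<le> s \<Longrightarrow> 0 \<le> w s" "continuous_on {0..t} w"
    and u: "continuous_on {0..t} u"
    and A: "0 \<le> A" "\<And>s. s \<in> {0..S} \<Longrightarrow> u s \<le> A"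
    and m: "\<And>s. s \<in> {S..t} \<Longrightarrow> u s \<le> m"
  shows "integral {0..t} (\<lambda>s. D t s * w s * u s)
           \<le> D t S * A * integral {0..S} w + m * integral {S..t} (\<lambda>s. D t s * w s)"
proof -
  have cont: "continuous_on {0..t} (\<lambda>s. D t s * w s * u s)" "continuous_on {0..t} (\<lambda>s. D t s * w s)"
    using St by (intro continuous_intros continuous w u; simp)+
  have int: "(\<lambda>s. D t s * w s * u s) integrable_on {a..b}" "(\<lambda>s. D t s * w s) integrable_on {a..b}"
     "w integrable_on {a..b}" if "0 \<le> a" "b \<le> t" for a b
    using that by (auto intro!: integrable_continuous_interval
        intro: continuous_on_subset[OF cont(1)] continuous_on_subset[OF cont(2)] continuous_on_subset[OF w(2)])
  have "integral {0..S} (\<lambda>s. D t s * w s * u s) \<le> integral {0..S} (\<lambda>s. D t S * A * w s)"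
  proof (rule integral_le)
    fix s assume s: "s \<in> {0..S}"
    have "D t s * u s \<le> D t S * A"
      using s St A mono[of s S t] nonneg[of s t] by (intro order.trans[OF mult_left_mono mult_right_mono]) auto
    from mult_right_mono[OF this w(1)[of s]] s show "D t s * w s * u s \<le> D t S * A * w s"
      by (simp add: mult_ac)
  qed (use int St in \<open>auto intro: integrable_on_mult_right\<close>)
  moreover have "integral {S..t} (\<lambda>s. D t s * w s * u s) \<le> integral {S..t} (\<lambda>s. m * (D t s * w s))"
  proof (rule integral_le)
    fix s assume s: "s \<in> {S..t}"
    then show "D t s * w s * u s \<le> m * (D t s * w s)"
      using mult_right_mono[OF m[OF s], of "D t s * w s"] nonneg[of s t] w(1)[of s] s St
      by (simp add: mult_ac)
  qed (use int St in \<open>auto intro: integrable_on_mult_right\<close>)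
  moreover have "integral {0..t} (\<lambda>s. D t s * w s * u s)
      = integral {0..S} (\<lambda>s. D t s * w s * u s) + integral {S..t} (\<lambda>s. D t s * w s * u s)"
    using Henstock_Kurzweil_Integration.integral_combine[OF St int(1)[of 0 t]] by simp
  ultimately show ?thesis by simp
qed

lemma weighted_integral_tendsto_zero:
  fixes w \<phi> :: "real \<Rightarrow> real"
  assumes w: "\<And>s. 0 \<le> s \<Longrightarrow> 0 \<le> w s" "\<And>t. 0 \<le> t \<Longrightarrow> continuous_on {0..t} w"
    and W: "\<And>t. 0 \<le> t \<Longrightarrow> integral {0..t} (\<lambda>s. D t s * w s) \<le> W"
    and \<phi>: "\<And>s. 0 \<le> s \<Longrightarrow> 0 \<le> \<phi> s" "\<And>t. 0 \<le> t \<Longrightarrow> continuous_on {0..t} \<phi>" "(\<phi> \<longlongrightarrow> 0) at_top"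
  shows "((\<lambda>t. integral {0..t} (\<lambda>s. D t s * w s * \<phi> s)) \<longlongrightarrow> 0) at_top"
proof (rule tendstoI)
  fix \<epsilon> :: real assume "\<epsilon> > 0"
  define c where "c = \<epsilon> / (2 * (\<bar>W\<bar> + 1))"
  have c: "0 < c" using \<open>\<epsilon> > 0\<close> by (simp add: c_def)
  have "c * W \<le> c * (\<bar>W\<bar> + 1)" using c by (intro mult_left_mono) auto
  also have "\<dots> = \<epsilon> / 2" by (simp add: c_def field_simps)
  finally have cW: "c * W \<le> \<epsilon> / 2" .
  obtain N where N: "\<And>s. N \<le> s \<Longrightarrow> \<bar>\<phi> s\<bar> < c"
    using tendstoD[OF \<phi>(3) c] by (auto simp: eventually_at_top_linorder)
  define S where "S = max N 0"
  have S: "0 \<le> S" "\<And>s. s \<in> {S..t} \<Longrightarrow> \<phi> s \<le> c" for t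
    using N by (force simp: S_def)+
  obtain B where B: "0 \<le> B" "\<And>s. s \<in> {0..S} \<Longrightarrow> \<phi> s \<le> B"
    using continuous_attains_sup[OF compact_Icc _ \<phi>(2)[OF S(1)]] \<phi>(1) S(1) by fastforce
  have "((\<lambda>t. D t S * B * integral {0..S} w) \<longlongrightarrow> 0) at_top"
    using tendsto_mult_left_zero[OF fades[OF S(1)]] by (simp add: mult.assoc)
  then have "\<forall>\<^sub>F t in at_top. D t S * B * integral {0..S} w < \<epsilon> / 2"
    by (rule order_tendstoD) (use \<open>\<epsilon> > 0\<close> in simp)
  with eventually_ge_at_top[of S]
  show "\<forall>\<^sub>F t in at_top. dist (integral {0..t} (\<lambda>s. D t s * w s * \<phi> s)) 0 < \<epsilon>"
  proof eventually_elim
    case (elim t)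
    then have t: "0 \<le> t" using S(1) by linarith
    have Dw: "continuous_on {0..t} (\<lambda>s. D t s * w s)"
      by (intro continuous_intros continuous w t)
    have "integral {S..t} (\<lambda>s. D t s * w s) \<le> integral {0..t} (\<lambda>s. D t s * w s)"
      by (rule integral_subset_le)
         (use S(1) nonneg w(1) in \<open>auto intro!: integrable_continuous_interval continuous_on_subset[OF Dw]\<close>)
    then have "c * integral {S..t} (\<lambda>s. D t s * w s) \<le> c * W"
      using W[OF t] c by (intro mult_left_mono) auto
    moreover have "integral {0..t} (\<lambda>s. D t s * w s * \<phi> s)
        \<le> D t S * B * integral {0..S} w + c * integral {S..t} (\<lambda>s. D t s * w s)"
      by (rule integral_split_le) (use elim S B w \<phi> t in auto)
    moreover have "0 \<le> integral {0..t} (\<lambda>s. D t s * w s * \<phi> s)"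
      by (rule integral_nonneg)
         (use nonneg w \<phi> t in \<open>auto intro!: integrable_continuous_interval continuous_intros continuous\<close>)
    ultimately show ?case
      using elim cW by (simp add: dist_real_def)
  qed
qed

lemma integral_tendsto_zero_if_dominated:
  fixes w \<psi> :: "real \<Rightarrow> real" and F :: "real \<Rightarrow> real \<Rightarrow> real"
  assumes w: "\<And>s. 0 \<le> s \<Longrightarrow> 0 \<le> w s" "\<And>t. 0 \<le> t \<Longrightarrow> continuous_on {0..t} w"
    and W: "\<And>t. 0 \<le> t \<Longrightarrow> integral {0..t} (\<lambda>s. D t s * w s) \<le> W"
    and \<psi>: "\<And>t. 0 \<le> t \<Longrightarrow> continuous_on {0..t} \<psi>" "(\<psi> \<longlongrightarrow> 0) at_top"
    and F: "\<And>t. 0 \<le> t \<Longrightarrow> continuous_on {0..t} (F t)"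
      "\<And>t s. 0 \<le> s \<Longrightarrow> s \<le> t \<Longrightarrow> \<bar>F t s\<bar> \<le> D t s * w s * \<bar>\<psi> s\<bar>"
  shows "((\<lambda>t. integral {0..t} (F t)) \<longlongrightarrow> 0) at_top"
proof (rule Lim_null_comparison)
  show "((\<lambda>t. integral {0..t} (\<lambda>s. D t s * w s * \<bar>\<psi> s\<bar>)) \<longlongrightarrow> 0) at_top"
    by (rule weighted_integral_tendsto_zero[OF w W])
       (auto intro: continuous_intros \<psi> tendsto_rabs_zero[OF \<psi>(2)])
  show "\<forall>\<^sub>F t in at_top. norm (integral {0..t} (F t)) \<le> integral {0..t} (\<lambda>s. D t s * w s * \<bar>\<psi> s\<bar>)"
    using eventually_ge_at_top[of 0]
  proof eventually_elim
    case (elim t)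
    show ?case
      by (rule integral_norm_bound_integral)
         (use elim F in \<open>auto intro!: integrable_continuous_interval continuous_intros continuous w \<psi>\<close>)
  qed
qed

end

lemma integral_tail_small_if_bounded:
  fixes \<kappa> :: "real \<Rightarrow> real"
  assumes \<kappa>: "\<And>s. 0 \<le> s \<Longrightarrow> 0 \<le> \<kappa> s" "\<And>t. 0 \<le> t \<Longrightarrow> continuous_on {0..t} \<kappa>"
    and K: "\<And>t. 0 \<le> t \<Longrightarrow> integral {0..t} \<kappa> \<le> K" and "\<epsilon> > 0"
  obtains T where "0 \<le> T" "\<And>S t. T \<le> S \<Longrightarrow> S \<le> t \<Longrightarrow> integral {S..t} \<kappa> \<le> \<epsilon>"
proof -
  define I where "I t = integral {0..t} \<kappa>" for t
  have combine: "I b = I a + integral {a..b} \<kappa>" and tail_nonneg: "0 \<le> integral {a..b} \<kappa>"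
    if "0 \<le> a" "a \<le> b" for a b
  proof -
    have int: "\<kappa> integrable_on {c..b}" if "0 \<le> c" "c \<le> b" for c
      by (rule integrable_continuous_interval, rule continuous_on_subset[OF \<kappa>(2)[of b]]) (use that in auto)
    show "I b = I a + integral {a..b} \<kappa>"
      unfolding I_def using Henstock_Kurzweil_Integration.integral_combine[OF that int[of 0]] that by simp
    show "0 \<le> integral {a..b} \<kappa>"
      using integral_nonneg[OF int[OF that]] \<kappa>(1) that by auto
  qed
  define L where "L = Sup (I ` {0..})"
  have bdd: "bdd_above (I ` {0..})"
    unfolding I_def by (rule bdd_aboveI[where M=K]) (use K in auto)
  obtain T where T: "0 \<le> T" "L - \<epsilon> < I T"
    using less_cSup_iff[OF _ bdd, of "L - \<epsilon>"] \<open>\<epsilon> > 0\<close> by (auto simp: L_def)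
  show ?thesis
  proof (rule that[OF T(1)])
    fix S t assume St: "T \<le> S" "S \<le> t"
    have "I t \<le> L" unfolding L_def by (rule cSup_upper[OF _ bdd]) (use St T in auto)
    then show "integral {S..t} \<kappa> \<le> \<epsilon>"
      using combine[of T S] tail_nonneg[of T S] combine[of S t] St T by linarith
  qed
qed

locale fading_volterra_inequality = fading_kernel D for D +
  fixes \<kappa> u h :: "real \<Rightarrow> real" and K :: real
  assumes weight_nonneg: "\<And>s. 0 \<le> s \<Longrightarrow> 0 \<le> \<kappa> s"
    and weight_continuous: "\<And>t. 0 \<le> t \<Longrightarrow> continuous_on {0..t} \<kappa>"
    and weight_integral_le: "\<And>t. 0 \<le> t \<Longrightarrow> integral {0..t} \<kappa> \<le> K"
    and solution_nonneg: "\<And>t. 0 \<le> t \<Longrightarrow> 0 \<le> u t"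
    and solution_continuous: "\<And>t. 0 \<le> t \<Longrightarrow> continuous_on {0..t} u"
    and inequality: "\<And>t. 0 \<le> t \<Longrightarrow> u t \<le> h t + integral {0..t} (\<lambda>s. D t s * \<kappa> s * u s)"
    and forcing_tendsto_zero: "(h \<longlongrightarrow> 0) at_top"
begin

lemma weight_tail_small:
  obtains T where "0 \<le> T" "\<And>S t. T \<le> S \<Longrightarrow> S \<le> t \<Longrightarrow> integral {S..t} \<kappa> \<le> 1/2"
  using integral_tail_small_if_bounded[OF weight_nonneg weight_continuous weight_integral_le, of "1/2"] by auto

lemma split_estimate:
  assumes St: "0 \<le> S" "S \<le> t" and tail: "integral {S..t} \<kappa> \<le> 1/2"
    and A: "0 \<le> A" "\<And>s. s \<in> {0..S} \<Longrightarrow> u s \<le> A" and m: "0 \<le> m" "\<And>s. s \<in> {S..t} \<Longrightarrow> u s \<le> m"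
  shows "u t \<le> h t + D t S * A * K + m / 2"
proof -
  have t: "0 \<le> t" using St by linarith
  have "integral {S..t} (\<lambda>s. D t s * \<kappa> s) \<le> integral {S..t} \<kappa>"
  proof (rule integral_le)
    show "(\<lambda>s. D t s * \<kappa> s) integrable_on {S..t}" "\<kappa> integrable_on {S..t}"
      using St by (auto intro!: integrable_continuous_interval continuous_intros
          intro: continuous_on_subset[OF weight_continuous[OF t]] continuous_on_subset[OF continuous[OF t]])
  qed (use St in \<open>auto intro!: mult_left_le_one_le weight_nonneg le_one nonneg\<close>)
  then have "m * integral {S..t} (\<lambda>s. D t s * \<kappa> s) \<le> m * (1/2)"
    using tail m(1) by (intro mult_left_mono) auto
  moreover have "D t S * A * integral {0..S} \<kappa> \<le> D t S * A * K"
    using weight_integral_le[OF St(1)] nonneg[OF St] A(1) by (intro mult_left_mono) auto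
  moreover have "integral {0..t} (\<lambda>s. D t s * \<kappa> s * u s)
      \<le> D t S * A * integral {0..S} \<kappa> + m * integral {S..t} (\<lambda>s. D t s * \<kappa> s)"
    by (rule integral_split_le)
       (use St A m weight_nonneg weight_continuous[OF t] solution_continuous[OF t] in auto)
  ultimately show ?thesis
    using inequality[OF t] by simp
qed

lemma bounded:
  obtains M where "0 \<le> M" "\<And>t. 0 \<le> t \<Longrightarrow> u t \<le> M"
proof -
  obtain T1 where T1: "0 \<le> T1" "\<And>S t. T1 \<le> S \<Longrightarrow> S \<le> t \<Longrightarrow> integral {S..t} \<kappa> \<le> 1/2"
    by (rule weight_tail_small) (rule that)
  obtain N where N: "\<And>t. N \<le> t \<Longrightarrow> \<bar>h t\<bar> < 1"
    using tendstoD[OF forcing_tendsto_zero, of 1] by (auto simp: eventually_at_top_linorder)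
  define T where "T = max T1 (max N 0)"
  have T: "0 \<le> T" "T1 \<le> T" "N \<le> T" by (auto simp: T_def)
  have "\<exists>s\<in>{0..T}. \<forall>r\<in>{0..T}. u r \<le> u s"
    by (rule continuous_attains_sup) (use T solution_continuous in auto)
  then obtain s\<^sub>0 where s\<^sub>0: "s\<^sub>0 \<in> {0..T}" "\<And>s. s \<in> {0..T} \<Longrightarrow> u s \<le> u s\<^sub>0"
    by blast
  define A where "A = u s\<^sub>0"
  have A: "0 \<le> A" "\<And>s. s \<in> {0..T} \<Longrightarrow> u s \<le> A"
    using s\<^sub>0 solution_nonneg by (auto simp: A_def)
  have K: "0 \<le> K" using weight_integral_le[of 0] by simp
  have late: "u t \<le> 2 + 2 * A * K" if t: "T \<le> t" for t
  proof -
    have "\<exists>\<tau>\<in>{T..t}. \<forall>s\<in>{T..t}. u s \<le> u \<tau>"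
      by (rule continuous_attains_sup)
         (use t T in \<open>auto intro: continuous_on_subset[OF solution_continuous[of t]]\<close>)
    then obtain \<tau> where \<tau>: "\<tau> \<in> {T..t}" "\<And>s. s \<in> {T..t} \<Longrightarrow> u s \<le> u \<tau>"
      by blast
    have "u \<tau> \<le> h \<tau> + D \<tau> T * A * K + u \<tau> / 2"
      by (rule split_estimate) (use \<tau> T T1 A solution_nonneg in auto)
    moreover have "D \<tau> T * A * K \<le> A * K"
      using mult_left_le_one_le[of "A * K" "D \<tau> T"] le_one[of T \<tau>] nonneg[of T \<tau>] \<tau> T A K
      by (simp add: mult.assoc)
    moreover have "h \<tau> < 1" using N[of \<tau>] \<tau> T by auto
    ultimately have "u \<tau> \<le> 2 + 2 * A * K" by simp
    then show ?thesis using \<tau>(2)[of t] t by simp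
  qed
  show ?thesis
  proof (rule that[of "A + 2 + 2 * A * K"])
    show "0 \<le> A + 2 + 2 * A * K" using A K by simp
    show "u t \<le> A + 2 + 2 * A * K" if "0 \<le> t" for t
      using A K late[of t] that by (cases "t \<le> T") (auto simp: add_increasing2)
  qed
qed

text \<open>The tail mass of the weight is eventually at most \<open>1/2\<close>, so every eventual bound on \<open>u\<close>
  roughly halves.\<close>

lemma eventually_le_half:
  assumes m: "0 \<le> m" "\<forall>\<^sub>F t in at_top. u t \<le> m" and "\<epsilon> > 0"
  shows "\<forall>\<^sub>F t in at_top. u t \<le> \<epsilon> + m / 2"
proof -
  obtain T1 where T1: "0 \<le> T1" "\<And>S t. T1 \<le> S \<Longrightarrow> S \<le> t \<Longrightarrow> integral {S..t} \<kappa> \<le> 1/2"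
    by (rule weight_tail_small) (rule that)
  obtain M where M: "0 \<le> M" "\<And>t. 0 \<le> t \<Longrightarrow> u t \<le> M"
    by (rule bounded) (rule that)
  obtain S0 where S0: "\<And>t. S0 \<le> t \<Longrightarrow> u t \<le> m"
    using m(2) by (auto simp: eventually_at_top_linorder)
  define S where "S = max S0 T1"
  have S: "0 \<le> S" "T1 \<le> S" "\<And>t. S \<le> t \<Longrightarrow> u t \<le> m"
    using S0 T1 by (auto simp: S_def)
  have "((\<lambda>t. D t S * M * K) \<longlongrightarrow> 0) at_top"
    using tendsto_mult_left_zero[OF fades[OF S(1)], of "M * K"] by (simp add: mult.assoc)
  then have "\<forall>\<^sub>F t in at_top. D t S * M * K < \<epsilon> / 2"
    by (rule order_tendstoD) (use \<open>\<epsilon> > 0\<close> in simp)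
  moreover have "\<forall>\<^sub>F t in at_top. h t < \<epsilon> / 2"
    by (rule order_tendstoD[OF forcing_tendsto_zero]) (use \<open>\<epsilon> > 0\<close> in simp)
  ultimately show ?thesis
    using eventually_ge_at_top[of S]
  proof eventually_elim
    case (elim t)
    have "u t \<le> h t + D t S * M * K + m / 2"
      by (rule split_estimate) (use elim S T1 M m(1) in auto)
    with elim show ?case by simp
  qed
qed

theorem tendsto_zero: "(u \<longlongrightarrow> 0) at_top"
proof (rule tendstoI)
  fix e :: real assume "e > 0"
  obtain M where M: "0 \<le> M" "\<And>t. 0 \<le> t \<Longrightarrow> u t \<le> M"
    by (rule bounded) (rule that)
  have halving: "\<forall>\<^sub>F t in at_top. u t \<le> e / 2 + M / 2 ^ n" for n
  proof (induction n)
    case 0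
    show ?case
      using eventually_ge_at_top[of 0] by eventually_elim (use M(2) \<open>e > 0\<close> in fastforce)
  next
    case (Suc n)
    have "\<forall>\<^sub>F t in at_top. u t \<le> e / 4 + (e / 2 + M / 2 ^ n) / 2"
      by (rule eventually_le_half[OF _ Suc]) (use M \<open>e > 0\<close> in auto)
    then show ?case
      by (rule eventually_mono) (simp add: field_simps)
  qed
  obtain n where "M / (e / 2) < 2 ^ n"
    using real_arch_pow[of 2 "M / (e / 2)"] by auto
  then have n: "M / 2 ^ n < e / 2"
    using \<open>e > 0\<close> by (simp add: field_simps)
  show "\<forall>\<^sub>F t in at_top. dist (u t) 0 < e"
    using halving[of n] eventually_ge_at_top[of 0]
  proof eventually_elim
    case (elim t)
    then have "u t < e" using n by linarith
    then show ?case using solution_nonneg[of t] elim by (simp add: dist_real_def)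
  qed
qed

end

section \<open>The damped oscillator\<close>

locale damped_oscillator =
  fixes \<omega> :: real and p p' f x x' :: "real \<Rightarrow> real"
  assumes omega_pos: "\<omega> > 0"
    and p_deriv: "\<And>t. t \<ge> 0 \<Longrightarrow> (p has_real_derivative p' t) (at t within {0..})"
    and p'_cont: "continuous_on {0..} p'"
    and p_pos: "\<And>t. t \<ge> 0 \<Longrightarrow> p t > 0"
    and p'_neg: "\<And>t. t \<ge> 0 \<Longrightarrow> p' t < 0"
    and p_int_infty: "filterlim (\<lambda>t. integral {0..t} p) at_top at_top"
    and p_sq_int: "(\<lambda>t. (p t)^2) integrable_on {0..}"
    and f_loc: "\<And>t. t \<ge> 0 \<Longrightarrow> f absolutely_integrable_on {0..t}"
    and x_deriv: "\<And>t. t \<ge> 0 \<Longrightarrow> (x has_real_derivative x' t) (at t within {0..})"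
    and x'_cont: "continuous_on {0..} x'"
    and x_ode: "\<And>t. t \<ge> 0 \<Longrightarrow>
       ((\<lambda>s. f s - p s * x' s - \<omega>^2 * x s) has_integral (x' t - x' 0)) {0..t}"
    and x0: "x 0 = 0" and x'0: "x' 0 = 0"
begin

abbreviation y :: "real \<Rightarrow> real" where "y \<equiv> y1 \<omega> f"

definition q :: "real \<Rightarrow> real" where "q s = p' s / 2 + (p s)^2 / 4"

definition q_bound :: real where "q_bound = p 0 / 2 + integral {0..} (\<lambda>s. (p s)^2) / 4"

lemma p_has_derivative: "0 \<le> a \<Longrightarrow> s \<in> {a..b} \<Longrightarrow> (p has_real_derivative p' s) (at s within {a..b})"
  by (rule has_field_derivative_subset[OF p_deriv]) auto

lemma x_has_derivative: "0 \<le> a \<Longrightarrow> s \<in> {a..b} \<Longrightarrow> (x has_real_derivative x' s) (at s within {a..b})"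
  by (rule has_field_derivative_subset[OF x_deriv]) auto

lemma continuous_on_p [continuous_intros]: "0 \<le> a \<Longrightarrow> continuous_on {a..b} p"
  by (rule DERIV_continuous_on[OF p_has_derivative])

lemma continuous_on_x [continuous_intros]: "0 \<le> a \<Longrightarrow> continuous_on {a..b} x"
  by (rule DERIV_continuous_on[OF x_has_derivative])

lemma continuous_on_p' [continuous_intros]: "0 \<le> a \<Longrightarrow> continuous_on {a..b} p'"
  by (rule continuous_on_subset[OF p'_cont]) auto

lemma continuous_on_x' [continuous_intros]: "0 \<le> a \<Longrightarrow> continuous_on {a..b} x'"
  by (rule continuous_on_subset[OF x'_cont]) auto

lemma continuous_on_q [continuous_intros]: "0 \<le> a \<Longrightarrow> continuous_on {a..b} q"
  unfolding q_def by (intro continuous_intros) auto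

lemma p'_has_integral: "0 \<le> s \<Longrightarrow> s \<le> t \<Longrightarrow> (p' has_integral (p t - p s)) {s..t}"
  by (rule fundamental_theorem_of_calculus)
     (auto simp: has_real_derivative_iff_has_vector_derivative[symmetric] intro!: p_has_derivative)

lemma p_antimono: assumes "0 \<le> s" "s \<le> t" shows "p t \<le> p s"
proof -
  have "(p' has_integral (p t - p s)) {s..t}"
    by (rule p'_has_integral[OF assms])
  moreover have "integral {s..t} p' \<le> integral {s..t} (\<lambda>_. 0)"
    by (rule integral_le) (use p'_neg assms in \<open>auto intro!: integrable_continuous_interval continuous_intros less_imp_le\<close>)
  ultimately show ?thesis by (simp add: integral_unique)
qed

lemma p_le_p0: "0 \<le> t \<Longrightarrow> p t \<le> p 0"
  using p_antimono[of 0 t] by simp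

lemma integral_p_nonneg: "0 \<le> s \<Longrightarrow> 0 \<le> integral {s..t} p"
  using p_pos by (intro integral_nonneg integrable_continuous_interval continuous_intros) (auto intro: less_imp_le)

lemma integral_p_split: "0 \<le> s \<Longrightarrow> s \<le> t \<Longrightarrow> integral {s..t} p = integral {0..t} p - integral {0..s} p"
  using Henstock_Kurzweil_Integration.integral_combine[of 0 s t p]
  by (simp add: integrable_continuous_interval continuous_on_p)

lemma Efun_has_derivative:
  "s \<in> {0..t} \<Longrightarrow> (Efun p t has_real_derivative Efun p t s * p s / 2) (at s within {0..t})"
  unfolding Efun_def
  by (auto intro!: derivative_eq_intros integral_has_real_derivative' continuous_intros)

lemma continuous_on_Efun [continuous_intros]: "continuous_on {0..t} (Efun p t)"
  by (rule DERIV_continuous_on[OF Efun_has_derivative])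

lemma Efun_pos: "0 < Efun p t s"
  by (simp add: Efun_def)

lemma Efun_self: "Efun p t t = 1"
  by (simp add: Efun_def)

lemma Efun_le_one: "0 \<le> s \<Longrightarrow> Efun p t s \<le> 1"
  using integral_p_nonneg[of s t] by (simp add: Efun_def)

lemma Efun_mono: "0 \<le> s \<Longrightarrow> s \<le> T \<Longrightarrow> T \<le> t \<Longrightarrow> Efun p t s \<le> Efun p t T"
  using integral_p_split[of s t] integral_p_split[of T t] integral_p_split[of s T] integral_p_nonneg[of s T]
  by (simp add: Efun_def)

lemma Efun_tendsto_zero:
  assumes "0 \<le> T" shows "((\<lambda>t. Efun p t T) \<longlongrightarrow> 0) at_top"
proof -
  have "filterlim (\<lambda>t. 1/2 * (- integral {0..T} p + integral {0..t} p)) at_top at_top"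
    by (intro filterlim_tendsto_pos_mult_at_top[OF tendsto_const]
        filterlim_tendsto_add_at_top[OF tendsto_const p_int_infty]) auto
  then have "filterlim (\<lambda>t. - (1/2) * (integral {0..t} p - integral {0..T} p)) at_bot at_top"
    by (simp add: filterlim_uminus_at_top algebra_simps)
  then have "((\<lambda>t. exp (- (1/2) * (integral {0..t} p - integral {0..T} p))) \<longlongrightarrow> 0) at_top"
    by (rule filterlim_compose[OF exp_at_bot])
  moreover have "\<forall>\<^sub>F t in at_top. exp (- (1/2) * (integral {0..t} p - integral {0..T} p)) = Efun p t T"
    using eventually_ge_at_top[of T]
    by eventually_elim (use integral_p_split[OF assms] in \<open>simp add: Efun_def\<close>)
  ultimately show ?thesis
    by (rule Lim_transform_eventually)
qed

sublocale Efun: fading_kernel "Efun p"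
  by unfold_locales (auto intro: less_imp_le Efun_pos Efun_le_one Efun_mono Efun_tendsto_zero continuous_on_Efun)

sublocale exp_kernel: fading_kernel "\<lambda>t s. exp (- (\<omega>^2) * (t - s))"
proof unfold_locales
  fix T :: real
  have "filterlim (\<lambda>t. \<omega>^2 * (- T + t)) at_top at_top"
    using omega_pos by (intro filterlim_tendsto_pos_mult_at_top[OF tendsto_const]
        filterlim_tendsto_add_at_top[OF tendsto_const filterlim_ident]) auto
  then have "filterlim (\<lambda>t. - (\<omega>^2) * (t - T)) at_bot at_top"
    by (simp add: filterlim_uminus_at_top algebra_simps)
  then show "((\<lambda>t. exp (- (\<omega>^2) * (t - T))) \<longlongrightarrow> 0) at_top"
    by (rule filterlim_compose[OF exp_at_bot])
qed (auto intro!: continuous_intros mult_left_mono)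

lemma exp_mult_f_absolutely_integrable:
  "0 \<le> t \<Longrightarrow> (\<lambda>r. exp (\<omega>^2 * r) * f r) absolutely_integrable_on {0..t}"
  by (rule absolutely_integrable_continuous_mult[OF _ f_loc]) (auto intro!: continuous_intros)

lemma y_eq: "y t = exp (- (\<omega>^2) * t) * integral {0..t} (\<lambda>r. exp (\<omega>^2 * r) * f r)"
proof -
  have "y t = integral {0..t} (\<lambda>r. exp (- (\<omega>^2) * t) * (exp (\<omega>^2 * r) * f r))"
    unfolding y1_def by (rule integral_cong) (simp add: algebra_simps flip: exp_add)
  then show ?thesis by simp
qed

lemma continuous_on_y [continuous_intros]: "0 \<le> t \<Longrightarrow> continuous_on {0..t} y"
  unfolding y_eq
  by (intro continuous_intros indefinite_integral_continuous_1 set_lebesgue_integral_eq_integral(1)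
      exp_mult_f_absolutely_integrable)

lemma has_integral_kernel_mult_f:
  fixes k k' :: "real \<Rightarrow> real"
  assumes t: "0 \<le> t"
    and k: "\<And>s. s \<in> {0..t} \<Longrightarrow> (k has_real_derivative k' s) (at s within {0..t})"
    and k': "continuous_on {0..t} k'"
  shows "((\<lambda>s. k s * f s) has_integral (k t * y t - integral {0..t} (\<lambda>s. (k' s - \<omega>^2 * k s) * y s))) {0..t}"
proof -
  have deriv: "((\<lambda>s. k s * exp (- (\<omega>^2) * s)) has_real_derivative (k' s - \<omega>^2 * k s) * exp (- (\<omega>^2) * s))
      (at s within {0..t})" if "s \<in> {0..t}" for s
    by (auto intro!: derivative_eq_intros k that simp: algebra_simps)
  have "continuous_on {0..t} (\<lambda>s. (k' s - \<omega>^2 * k s) * exp (- (\<omega>^2) * s))"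
    by (intro continuous_intros k' DERIV_continuous_on[OF k])
  from has_integral_by_parts_absolutely_integrable[OF t exp_mult_f_absolutely_integrable[OF t] deriv this]
  have "((\<lambda>s. k s * exp (- (\<omega>^2) * s) * (exp (\<omega>^2 * s) * f s)) has_integral
      (k t * y t - integral {0..t} (\<lambda>s. (k' s - \<omega>^2 * k s) * y s))) {0..t}"
    by (simp add: y_eq mult.assoc)
  moreover have "(\<lambda>s. k s * exp (- (\<omega>^2) * s) * (exp (\<omega>^2 * s) * f s)) = (\<lambda>s. k s * f s)"
    by (simp add: fun_eq_iff algebra_simps flip: exp_add)
  ultimately show ?thesis by simp
qed

lemma has_integral_kernel_mult_ode:
  fixes k k' :: "real \<Rightarrow> real"
  assumes t: "0 \<le> t"
    and k: "\<And>s. s \<in> {0..t} \<Longrightarrow> (k has_real_derivative k' s) (at s within {0..t})"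
    and k': "continuous_on {0..t} k'"
  shows "((\<lambda>s. k s * (f s - p s * x' s - \<omega>^2 * x s)) has_integral
           (k t * x' t - integral {0..t} (\<lambda>s. k' s * x' s))) {0..t}"
proof -
  define g where "g s = f s - p s * x' s - \<omega>^2 * x s" for s
  have "g absolutely_integrable_on {0..t}"
    unfolding g_def
    by (intro set_integral_diff(1) f_loc[OF t] absolutely_integrable_continuous_real continuous_intros) auto
  from has_integral_by_parts_absolutely_integrable[OF t this k k']
  have "((\<lambda>s. k s * g s) has_integral
      (k t * integral {0..t} g - integral {0..t} (\<lambda>r. k' r * integral {0..r} g))) {0..t}" .
  moreover have g: "integral {0..r} g = x' r" if "r \<in> {0..t}" for r
    using x_ode[of r] that x'0 unfolding g_def by (simp add: integral_unique)
  moreover have "integral {0..t} (\<lambda>r. k' r * integral {0..r} g) = integral {0..t} (\<lambda>r. k' r * x' r)"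
    by (rule integral_cong) (simp add: g)
  ultimately show ?thesis
    using t unfolding g_def by simp
qed

lemma kernel_identity:
  fixes k k' k'' :: "real \<Rightarrow> real"
  assumes t: "0 \<le> t"
    and k: "\<And>s. s \<in> {0..t} \<Longrightarrow> (k has_real_derivative k' s) (at s within {0..t})"
    and k': "\<And>s. s \<in> {0..t} \<Longrightarrow> (k' has_real_derivative k'' s) (at s within {0..t})"
    and k'': "continuous_on {0..t} k''"
  shows "k t * x' t - k' t * x t + p t * k t * x t = k t * y t
      + integral {0..t} (\<lambda>s. (\<omega>^2 * k s - k' s) * y s)
      + integral {0..t} (\<lambda>s. (k' s * p s + k s * p' s - k'' s - \<omega>^2 * k s) * x s)"
proof -
  have kc: "continuous_on {0..t} k" and k'c: "continuous_on {0..t} k'"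
    using DERIV_continuous_on[OF k] DERIV_continuous_on[OF k'] by auto
  define Ix' where "Ix' = integral {0..t} (\<lambda>s. k' s * x' s)"
  define Iy where "Iy = integral {0..t} (\<lambda>s. (k' s - \<omega>^2 * k s) * y s)"
  have ode: "((\<lambda>s. k s * (f s - p s * x' s - \<omega>^2 * x s)) has_integral (k t * x' t - Ix')) {0..t}"
    unfolding Ix'_def by (rule has_integral_kernel_mult_ode[OF t k k'c])
  have forcing: "((\<lambda>s. k s * f s) has_integral (k t * y t - Iy)) {0..t}"
    unfolding Iy_def by (rule has_integral_kernel_mult_f[OF t k k'c])
  have k'x': "((\<lambda>s. k' s * x' s) has_integral Ix') {0..t}"
    unfolding Ix'_def by (intro integrable_integral integrable_continuous_interval continuous_intros k'c) auto
  have ftc_k'x: "((\<lambda>s. k'' s * x s + k' s * x' s) has_integral (k' t * x t - k' 0 * x 0)) {0..t}"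
    by (rule fundamental_theorem_of_calculus[OF t])
       (auto simp: has_real_derivative_iff_has_vector_derivative[symmetric]
        intro!: derivative_eq_intros k' x_has_derivative)
  have ftc_kpx: "((\<lambda>s. (k' s * p s + k s * p' s) * x s + k s * p s * x' s) has_integral
      (k t * p t * x t - k 0 * p 0 * x 0)) {0..t}"
    by (rule fundamental_theorem_of_calculus[OF t])
       (auto simp: has_real_derivative_iff_has_vector_derivative[symmetric] algebra_simps
        intro!: derivative_eq_intros k x_has_derivative p_has_derivative)
  have "((\<lambda>s. (k' s * p s + k s * p' s - k'' s - \<omega>^2 * k s) * x s) has_integral
      (k t * p t * x t - k' t * x t + (k t * x' t - Ix') - (k t * y t - Iy) + Ix')) {0..t}"
    using has_integral_add[OF has_integral_diff[OF has_integral_add[OF has_integral_diff[OF ftc_kpx ftc_k'x] ode]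
        forcing] k'x']
    by (simp add: x0 algebra_simps)
  moreover have "((\<lambda>s. (\<omega>^2 * k s - k' s) * y s) has_integral - Iy) {0..t}"
  proof -
    have "(\<lambda>s. (k' s - \<omega>^2 * k s) * y s) integrable_on {0..t}"
      by (intro integrable_continuous_interval continuous_intros kc k'c t)
    from has_integral_neg[OF integrable_integral[OF this]] show ?thesis
      unfolding Iy_def by (simp add: algebra_simps)
  qed
  ultimately show ?thesis
    by (simp add: integral_unique)
qed

text \<open>For \<open>k = E c\<close> with \<open>c'' = -\<omega>\<^sup>2 c\<close> the damping cancels and the coefficient of \<open>x\<close> in
  \<open>kernel_identity\<close> collapses to \<open>E q c\<close>.\<close>

lemma Efun_kernel_identity:
  fixes c c' L :: "real \<Rightarrow> real"
  assumes t: "0 \<le> t"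
    and c: "\<And>s. (c has_real_derivative c' s) (at s)"
    and c': "\<And>s. (c' has_real_derivative - (\<omega>^2 * c s)) (at s)"
    and L: "\<And>s. \<omega>^2 * c s - c' s = L s"
  shows "c t * x' t - c' t * x t + p t * c t * x t / 2 = c t * y t
      + integral {0..t} (\<lambda>s. Efun p t s * L s * y s)
      - integral {0..t} (\<lambda>s. Efun p t s * p s * c s * y s) / 2
      + integral {0..t} (\<lambda>s. Efun p t s * q s * c s * x s)"
proof -
  define k where "k s = Efun p t s * c s" for s
  define k' where "k' s = Efun p t s * (p s / 2 * c s + c' s)" for s
  define k'' where "k'' s = Efun p t s * (p s / 2 * (p s / 2 * c s + c' s) + p' s / 2 * c s + p s / 2 * c' s
      - \<omega>^2 * c s)" for s
  have cont_c: "continuous_on S c" "continuous_on S c'" for S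
    using c c' by (auto intro!: continuous_at_imp_continuous_on DERIV_isCont)
  have "k t * x' t - k' t * x t + p t * k t * x t = k t * y t
      + integral {0..t} (\<lambda>s. (\<omega>^2 * k s - k' s) * y s)
      + integral {0..t} (\<lambda>s. (k' s * p s + k s * p' s - k'' s - \<omega>^2 * k s) * x s)"
  proof (rule kernel_identity[OF t])
    fix s assume s: "s \<in> {0..t}"
    show "(k has_real_derivative k' s) (at s within {0..t})"
      unfolding k_def k'_def
      by (auto intro!: derivative_eq_intros Efun_has_derivative[OF s] has_field_derivative_at_within[OF c]
          simp: algebra_simps)
    show "(k' has_real_derivative k'' s) (at s within {0..t})"
      unfolding k'_def k''_def using s
      by (auto intro!: derivative_eq_intros Efun_has_derivative[OF s] p_has_derivative
          has_field_derivative_at_within[OF c] has_field_derivative_at_within[OF c'] simp: field_simps)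
  next
    show "continuous_on {0..t} k''"
      unfolding k''_def by (intro continuous_intros cont_c) auto
  qed
  moreover have "integral {0..t} (\<lambda>s. (\<omega>^2 * k s - k' s) * y s)
      = integral {0..t} (\<lambda>s. Efun p t s * L s * y s)
        - integral {0..t} (\<lambda>s. Efun p t s * p s * c s * y s) / 2"
  proof -
    have "integral {0..t} (\<lambda>s. (\<omega>^2 * k s - k' s) * y s)
        = integral {0..t} (\<lambda>s. Efun p t s * (\<omega>^2 * c s - c' s) * y s - Efun p t s * p s * c s * y s / 2)"
      by (rule integral_cong) (simp add: k_def k'_def algebra_simps)
    also have "\<dots> = integral {0..t} (\<lambda>s. Efun p t s * L s * y s)
        - integral {0..t} (\<lambda>s. Efun p t s * p s * c s * y s / 2)"
      unfolding L[symmetric] by (intro integral_diff integrable_continuous_interval continuous_intros cont_c t) auto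
    finally show ?thesis by simp
  qed
  moreover have "integral {0..t} (\<lambda>s. (k' s * p s + k s * p' s - k'' s - \<omega>^2 * k s) * x s)
      = integral {0..t} (\<lambda>s. Efun p t s * q s * c s * x s)"
    by (rule integral_cong) (simp add: k_def k'_def k''_def q_def algebra_simps power2_eq_square)
  moreover have "k t = c t" "k' t = p t / 2 * c t + c' t"
    by (simp_all add: k_def k'_def Efun_self)
  ultimately show ?thesis
    by (simp add: algebra_simps)
qed

lemma x_representation:
  assumes "0 \<le> t"
  shows "x t = integral {0..t} (\<lambda>s. Efun p t s * L1 \<omega> t s * y s)
     - integral {0..t} (\<lambda>s. Efun p t s * p s * (sin (\<omega> * (t - s)) / \<omega>) * y s) / 2
     + integral {0..t} (\<lambda>s. Efun p t s * q s * (sin (\<omega> * (t - s)) / \<omega>) * x s)"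
proof -
  have "\<omega> \<noteq> 0" using omega_pos by simp
  have L: "\<omega>^2 * (sin (\<omega> * (t - s)) / \<omega>) - - cos (\<omega> * (t - s)) = L1 \<omega> t s" for s
    using \<open>\<omega> \<noteq> 0\<close> by (simp add: L1_def power2_eq_square)
  have "((\<lambda>s. sin (\<omega> * (t - s)) / \<omega>) has_real_derivative - cos (\<omega> * (t - s))) (at s)"
    and "((\<lambda>s. - cos (\<omega> * (t - s))) has_real_derivative - (\<omega>^2 * (sin (\<omega> * (t - s)) / \<omega>))) (at s)" for s
    using \<open>\<omega> \<noteq> 0\<close> by (auto intro!: derivative_eq_intros simp: power2_eq_square)
  from Efun_kernel_identity[OF assms this L] show ?thesis
    by simp
qed

lemma x'_representation:
  assumes "0 \<le> t"
  shows "x' t + p t * x t / 2 = y t + integral {0..t} (\<lambda>s. Efun p t s * L2 \<omega> t s * y s)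
     - integral {0..t} (\<lambda>s. Efun p t s * p s * cos (\<omega> * (t - s)) * y s) / 2
     + integral {0..t} (\<lambda>s. Efun p t s * q s * cos (\<omega> * (t - s)) * x s)"
proof -
  have L: "\<omega>^2 * cos (\<omega> * (t - s)) - \<omega> * sin (\<omega> * (t - s)) = L2 \<omega> t s" for s
    by (simp add: L2_def)
  have "((\<lambda>s. cos (\<omega> * (t - s))) has_real_derivative \<omega> * sin (\<omega> * (t - s))) (at s)"
    and "((\<lambda>s. \<omega> * sin (\<omega> * (t - s))) has_real_derivative - (\<omega>^2 * cos (\<omega> * (t - s)))) (at s)" for s
    by (auto intro!: derivative_eq_intros simp: power2_eq_square)
  from Efun_kernel_identity[OF assms this L] show ?thesis
    by simp
qed

lemma y_representation:
  assumes t: "0 \<le> t"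
  shows "y t = x' t - \<omega>^2 * x t + p t * x t
     - integral {0..t} (\<lambda>s. exp (- (\<omega>^2) * (t - s)) * (\<omega>^2 * p s + p' s - \<omega>^4 - \<omega>^2) * x s)"
proof -
  define k where "k s = exp (- (\<omega>^2) * (t - s))" for s
  have k: "(k has_real_derivative \<omega>^2 * k s) (at s within {0..t})"
    and k': "((\<lambda>s. \<omega>^2 * k s) has_real_derivative \<omega>^4 * k s) (at s within {0..t})" for s
    unfolding k_def by (auto intro!: derivative_eq_intros simp: algebra_simps power4_eq_xxxx power2_eq_square)
  have "k t * x' t - \<omega>^2 * k t * x t + p t * k t * x t = k t * y t
      + integral {0..t} (\<lambda>s. (\<omega>^2 * k s - \<omega>^2 * k s) * y s)
      + integral {0..t} (\<lambda>s. (\<omega>^2 * k s * p s + k s * p' s - \<omega>^4 * k s - \<omega>^2 * k s) * x s)"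
    by (rule kernel_identity[OF t k k']) (simp add: k_def continuous_intros)
  moreover have "integral {0..t} (\<lambda>s. (\<omega>^2 * k s * p s + k s * p' s - \<omega>^4 * k s - \<omega>^2 * k s) * x s)
      = integral {0..t} (\<lambda>s. exp (- (\<omega>^2) * (t - s)) * (\<omega>^2 * p s + p' s - \<omega>^4 - \<omega>^2) * x s)"
    by (rule integral_cong) (simp add: k_def algebra_simps)
  ultimately show ?thesis
    by (simp add: k_def)
qed

lemma integral_abs_q_le:
  assumes t: "0 \<le> t"
  shows "integral {0..t} (\<lambda>s. \<bar>q s\<bar>) \<le> q_bound"
proof -
  have ftc: "((\<lambda>s. - p' s) has_integral (p 0 - p t)) {0..t}"
    using has_integral_neg[OF p'_has_integral[OF order_refl t]] by simp
  have p2: "(\<lambda>s. (p s)^2) integrable_on {0..t}"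
    by (intro integrable_continuous_interval continuous_intros) auto
  have "integral {0..t} (\<lambda>s. \<bar>q s\<bar>) \<le> integral {0..t} (\<lambda>s. - p' s / 2 + (p s)^2 / 4)"
  proof (rule integral_le)
    show "(\<lambda>s. - p' s / 2 + (p s)^2 / 4) integrable_on {0..t}"
      by (intro integrable_continuous_interval continuous_intros) auto
    fix s assume "s \<in> {0..t}"
    then show "\<bar>q s\<bar> \<le> - p' s / 2 + (p s)^2 / 4"
      using p'_neg[of s] unfolding q_def by (simp add: abs_le_iff)
  qed (intro integrable_continuous_interval continuous_intros; simp)
  also have "\<dots> = (p 0 - p t) / 2 + integral {0..t} (\<lambda>s. (p s)^2) / 4"
    by (intro integral_unique has_integral_add has_integral_divide ftc integrable_integral p2)
  also have "\<dots> \<le> q_bound"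
  proof -
    have "integral {0..t} (\<lambda>s. (p s)^2) \<le> integral {0..} (\<lambda>s. (p s)^2)"
      by (rule integral_subset_le) (use p2 p_sq_int in auto)
    then show ?thesis using p_pos[OF t] by (simp add: q_bound_def field_simps)
  qed
  finally show ?thesis .
qed

lemma integral_Efun_p_le:
  assumes t: "0 \<le> t"
  shows "integral {0..t} (\<lambda>s. Efun p t s * p s) \<le> 2"
proof -
  have "((\<lambda>s. Efun p t s * p s) has_integral (2 * Efun p t t - 2 * Efun p t 0)) {0..t}"
    by (rule fundamental_theorem_of_calculus[OF t])
       (auto simp: has_real_derivative_iff_has_vector_derivative[symmetric]
        intro!: derivative_eq_intros Efun_has_derivative)
  then show ?thesis
    using Efun_pos[of t 0] by (simp add: integral_unique Efun_self)
qed

lemma integral_Efun_abs_q_le: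
  assumes t: "0 \<le> t"
  shows "integral {0..t} (\<lambda>s. Efun p t s * \<bar>q s\<bar>) \<le> q_bound"
proof -
  have "integral {0..t} (\<lambda>s. Efun p t s * \<bar>q s\<bar>) \<le> integral {0..t} (\<lambda>s. \<bar>q s\<bar>)"
    by (rule integral_le)
       (auto intro!: integrable_continuous_interval continuous_intros mult_left_le_one_le Efun_le_one
        intro: less_imp_le Efun_pos)
  then show ?thesis
    using integral_abs_q_le[OF t] by linarith
qed

lemma integral_exp_kernel_le:
  assumes t: "0 \<le> t" and "0 \<le> C"
  shows "integral {0..t} (\<lambda>s. exp (- (\<omega>^2) * (t - s)) * (C - p' s)) \<le> C / \<omega>^2 + p 0"
proof -
  have \<omega>: "\<omega>^2 > 0" using omega_pos by simp
  have "((\<lambda>s. exp (- (\<omega>^2) * (t - s)) * C) has_integral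
      (exp (- (\<omega>^2) * (t - t)) * C / \<omega>^2 - exp (- (\<omega>^2) * (t - 0)) * C / \<omega>^2)) {0..t}"
    by (rule fundamental_theorem_of_calculus[OF t])
       (use \<omega> in \<open>auto simp: has_real_derivative_iff_has_vector_derivative[symmetric] power4_eq_xxxx
          power2_eq_square intro!: derivative_eq_intros\<close>)
  then have exp: "((\<lambda>s. exp (- (\<omega>^2) * (t - s)) * C) has_integral (C / \<omega>^2 - exp (- (\<omega>^2) * t) * C / \<omega>^2)) {0..t}"
    by simp
  have p': "((\<lambda>s. - p' s) has_integral (p 0 - p t)) {0..t}"
    using has_integral_neg[OF p'_has_integral[OF order_refl t]] by simp
  have "integral {0..t} (\<lambda>s. exp (- (\<omega>^2) * (t - s)) * (C - p' s))
      \<le> integral {0..t} (\<lambda>s. exp (- (\<omega>^2) * (t - s)) * C + - p' s)"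
  proof (rule integral_le)
    fix s assume s: "s \<in> {0..t}"
    have "exp (- (\<omega>^2) * (t - s)) * - p' s \<le> - p' s"
      using s p'_neg[of s] \<omega> by (intro mult_left_le_one_le) (auto simp: mult_nonneg_nonneg)
    then show "exp (- (\<omega>^2) * (t - s)) * (C - p' s) \<le> exp (- (\<omega>^2) * (t - s)) * C + - p' s"
      by (simp add: algebra_simps)
  qed (use exp p' in \<open>auto intro!: integrable_continuous_interval continuous_intros\<close>)
  also have "\<dots> = C / \<omega>^2 - exp (- (\<omega>^2) * t) * C / \<omega>^2 + (p 0 - p t)"
    by (rule integral_unique, rule has_integral_add[OF exp p'])
  also have "\<dots> \<le> C / \<omega>^2 + p 0"
  proof -
    have "0 \<le> exp (- (\<omega>^2) * t) * C / \<omega>^2"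
      using \<open>0 \<le> C\<close> by simp
    then show ?thesis using p_pos[OF t] by linarith
  qed
  finally show ?thesis .
qed

lemma p_mult_tendsto_zero:
  assumes "(g \<longlongrightarrow> 0) at_top"
  shows "((\<lambda>t. p t * g t) \<longlongrightarrow> 0) at_top"
proof (rule Lim_null_comparison)
  show "\<forall>\<^sub>F t in at_top. norm (p t * g t) \<le> p 0 * \<bar>g t\<bar>"
    using eventually_ge_at_top[of 0]
  proof eventually_elim
    case (elim t)
    then have "\<bar>p t\<bar> \<le> p 0" using p_le_p0 p_pos[of t] by simp
    then show ?case by (simp add: abs_mult mult_right_mono)
  qed
  show "((\<lambda>t. p 0 * \<bar>g t\<bar>) \<longlongrightarrow> 0) at_top"
    by (intro tendsto_mult_right_zero tendsto_rabs_zero assms)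
qed

lemma Efun_p_integral_tendsto_zero:
  fixes g :: "real \<Rightarrow> real" and c :: "real \<Rightarrow> real \<Rightarrow> real"
  assumes g: "\<And>t. 0 \<le> t \<Longrightarrow> continuous_on {0..t} g" "(g \<longlongrightarrow> 0) at_top"
    and c: "\<And>t. continuous_on {0..t} (c t)" "\<And>t s. \<bar>c t s\<bar> \<le> C"
  shows "((\<lambda>t. integral {0..t} (\<lambda>s. Efun p t s * p s * c t s * g s)) \<longlongrightarrow> 0) at_top"
proof (rule Efun.integral_tendsto_zero_if_dominated[where w = p and W = 2 and \<psi> = "\<lambda>s. C * g s"])
  show "((\<lambda>s. C * g s) \<longlongrightarrow> 0) at_top"
    by (rule tendsto_mult_right_zero[OF g(2)])
  fix t s :: real assume "0 \<le> s" "s \<le> t"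
  have "\<bar>c t s\<bar> * \<bar>g s\<bar> \<le> \<bar>C * g s\<bar>"
    using c(2)[of t s] by (auto simp: abs_mult intro: mult_right_mono)
  then show "\<bar>Efun p t s * p s * c t s * g s\<bar> \<le> Efun p t s * p s * \<bar>C * g s\<bar>"
    using Efun_pos[of t s] p_pos[of s] \<open>0 \<le> s\<close>
    by (simp add: abs_mult mult.assoc mult_left_mono)
qed (use p_pos in \<open>auto intro: less_imp_le integral_Efun_p_le intro!: continuous_intros g c\<close>)

lemma Efun_q_integral_tendsto_zero:
  fixes g :: "real \<Rightarrow> real" and c :: "real \<Rightarrow> real \<Rightarrow> real"
  assumes g: "\<And>t. 0 \<le> t \<Longrightarrow> continuous_on {0..t} g" "(g \<longlongrightarrow> 0) at_top"
    and c: "\<And>t. continuous_on {0..t} (c t)" "\<And>t s. \<bar>c t s\<bar> \<le> C"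
  shows "((\<lambda>t. integral {0..t} (\<lambda>s. Efun p t s * q s * c t s * g s)) \<longlongrightarrow> 0) at_top"
proof (rule Efun.integral_tendsto_zero_if_dominated[where w = "\<lambda>s. \<bar>q s\<bar>" and \<psi> = "\<lambda>s. C * g s"])
  show "((\<lambda>s. C * g s) \<longlongrightarrow> 0) at_top"
    by (rule tendsto_mult_right_zero[OF g(2)])
  fix t s :: real assume "0 \<le> s" "s \<le> t"
  have "\<bar>c t s\<bar> * \<bar>g s\<bar> \<le> \<bar>C * g s\<bar>"
    using c(2)[of t s] by (auto simp: abs_mult intro: mult_right_mono)
  then show "\<bar>Efun p t s * q s * c t s * g s\<bar> \<le> Efun p t s * \<bar>q s\<bar> * \<bar>C * g s\<bar>"
    using Efun_pos[of t s] by (simp add: abs_mult mult.assoc mult_left_mono)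
qed (auto intro: integral_Efun_abs_q_le intro!: continuous_intros g c)

lemma exp_kernel_integral_tendsto_zero:
  assumes "(x \<longlongrightarrow> 0) at_top"
  shows "((\<lambda>t. integral {0..t} (\<lambda>s. exp (- (\<omega>^2) * (t - s)) * (\<omega>^2 * p s + p' s - \<omega>^4 - \<omega>^2) * x s))
           \<longlongrightarrow> 0) at_top"
proof -
  define C where "C = \<omega>^2 * p 0 + \<omega>^4 + \<omega>^2"
  have C: "0 \<le> C"
    using p_pos[of 0] by (simp add: C_def)
  show ?thesis
  proof (rule exp_kernel.integral_tendsto_zero_if_dominated[where \<psi> = x and w = "\<lambda>s. C - p' s"])
    show "\<And>t. 0 \<le> t \<Longrightarrow> integral {0..t} (\<lambda>s. exp (- (\<omega>^2) * (t - s)) * (C - p' s)) \<le> C / \<omega>^2 + p 0"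
      by (rule integral_exp_kernel_le[OF _ C])
    fix t s :: real assume s: "0 \<le> s" "s \<le> t"
    have "0 \<le> \<omega>^2 * p s" "\<omega>^2 * p s \<le> \<omega>^2 * p 0" "0 \<le> \<omega>^4" "0 \<le> \<omega>^2"
      using p_pos[of s] p_le_p0[of s] s by (auto intro: mult_left_mono)
    then have "\<bar>\<omega>^2 * p s + p' s - \<omega>^4 - \<omega>^2\<bar> \<le> C - p' s"
      unfolding abs_le_iff C_def using p'_neg[of s] s by (intro conjI; linarith)
    then show "\<bar>exp (- (\<omega>^2) * (t - s)) * (\<omega>^2 * p s + p' s - \<omega>^4 - \<omega>^2) * x s\<bar>
        \<le> exp (- (\<omega>^2) * (t - s)) * (C - p' s) * \<bar>x s\<bar>"
      by (simp add: abs_mult mult_right_mono)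
  qed (use assms C p'_neg in \<open>auto intro!: continuous_intros less_imp_le order.strict_trans2[OF _ C]\<close>)
qed

lemma oscillating_factors_bounded:
  "\<bar>sin (\<omega> * (t - s))\<bar> / \<omega> \<le> 1 / \<omega>" "\<bar>cos (\<omega> * (t - s))\<bar> \<le> 1"
  using omega_pos by (simp_all add: divide_right_mono)

lemma y_remainders_tendsto_zero:
  assumes "(y \<longlongrightarrow> 0) at_top"
  shows "((\<lambda>t. integral {0..t} (\<lambda>s. Efun p t s * p s * (sin (\<omega> * (t - s)) / \<omega>) * y s) / 2) \<longlongrightarrow> 0) at_top"
    and "((\<lambda>t. integral {0..t} (\<lambda>s. Efun p t s * p s * cos (\<omega> * (t - s)) * y s) / 2) \<longlongrightarrow> 0) at_top"
   by (rule tendsto_divide_zero, rule Efun_p_integral_tendsto_zero[where C = "1 / \<omega>"],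
       use assms omega_pos in \<open>auto intro!: continuous_intros oscillating_factors_bounded\<close>)
      (rule tendsto_divide_zero, rule Efun_p_integral_tendsto_zero[where C = 1],
       use assms in \<open>auto intro!: continuous_intros oscillating_factors_bounded\<close>)

lemma x_remainders_tendsto_zero:
  assumes "(x \<longlongrightarrow> 0) at_top"
  shows "((\<lambda>t. integral {0..t} (\<lambda>s. Efun p t s * q s * (sin (\<omega> * (t - s)) / \<omega>) * x s)) \<longlongrightarrow> 0) at_top"
    and "((\<lambda>t. integral {0..t} (\<lambda>s. Efun p t s * q s * cos (\<omega> * (t - s)) * x s)) \<longlongrightarrow> 0) at_top"
   by (rule Efun_q_integral_tendsto_zero[where C = "1 / \<omega>"],
       use assms omega_pos in \<open>auto intro!: continuous_intros oscillating_factors_bounded\<close>)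
      (rule Efun_q_integral_tendsto_zero[where C = 1],
       use assms in \<open>auto intro!: continuous_intros oscillating_factors_bounded\<close>)

lemma tendsto_zero_if_solution_tendsto_zero:
  assumes x: "(x \<longlongrightarrow> 0) at_top" and x': "(x' \<longlongrightarrow> 0) at_top"
  shows "(y \<longlongrightarrow> 0) at_top"
    and "((\<lambda>t. integral {0..t} (\<lambda>s. Efun p t s * L1 \<omega> t s * y s)) \<longlongrightarrow> 0) at_top"
    and "((\<lambda>t. integral {0..t} (\<lambda>s. Efun p t s * L2 \<omega> t s * y s)) \<longlongrightarrow> 0) at_top"
proof -
  have ev: "\<forall>\<^sub>F t in at_top. 0 \<le> (t::real)" by (rule eventually_ge_at_top)
  have "((\<lambda>t. x' t - \<omega>^2 * x t + p t * x t
      - integral {0..t} (\<lambda>s. exp (- (\<omega>^2) * (t - s)) * (\<omega>^2 * p s + p' s - \<omega>^4 - \<omega>^2) * x s))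
      \<longlongrightarrow> 0) at_top"
    using tendsto_diff[OF tendsto_add[OF tendsto_diff[OF x' tendsto_mult_right_zero[OF x]] p_mult_tendsto_zero[OF x]]
        exp_kernel_integral_tendsto_zero[OF x]] by simp
  then show y: "(y \<longlongrightarrow> 0) at_top"
    by (rule Lim_transform_eventually) (use ev in \<open>eventually_elim, simp add: y_representation\<close>)
  have "((\<lambda>t. x t
      + integral {0..t} (\<lambda>s. Efun p t s * p s * (sin (\<omega> * (t - s)) / \<omega>) * y s) / 2
      - integral {0..t} (\<lambda>s. Efun p t s * q s * (sin (\<omega> * (t - s)) / \<omega>) * x s)) \<longlongrightarrow> 0) at_top"
    using tendsto_diff[OF tendsto_add[OF x y_remainders_tendsto_zero(1)[OF y]] x_remainders_tendsto_zero(1)[OF x]]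
    by simp
  then show "((\<lambda>t. integral {0..t} (\<lambda>s. Efun p t s * L1 \<omega> t s * y s)) \<longlongrightarrow> 0) at_top"
    by (rule Lim_transform_eventually) (use ev in \<open>eventually_elim, simp add: x_representation\<close>)
  have "((\<lambda>t. x' t + p t * x t / 2 - y t
      + integral {0..t} (\<lambda>s. Efun p t s * p s * cos (\<omega> * (t - s)) * y s) / 2
      - integral {0..t} (\<lambda>s. Efun p t s * q s * cos (\<omega> * (t - s)) * x s)) \<longlongrightarrow> 0) at_top"
    using tendsto_diff[OF tendsto_add[OF tendsto_diff[OF tendsto_add[OF x'
        tendsto_divide_zero[OF p_mult_tendsto_zero[OF x]]] y] y_remainders_tendsto_zero(2)[OF y]]
        x_remainders_tendsto_zero(2)[OF x]] by simp
  then show "((\<lambda>t. integral {0..t} (\<lambda>s. Efun p t s * L2 \<omega> t s * y s)) \<longlongrightarrow> 0) at_top"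
    by (rule Lim_transform_eventually) (use ev in \<open>eventually_elim, simp add: x'_representation\<close>)
qed

lemma abs_x_le_volterra:
  assumes t: "0 \<le> t"
  shows "\<bar>x t\<bar> \<le> \<bar>integral {0..t} (\<lambda>s. Efun p t s * L1 \<omega> t s * y s)
      - integral {0..t} (\<lambda>s. Efun p t s * p s * (sin (\<omega> * (t - s)) / \<omega>) * y s) / 2\<bar>
      + integral {0..t} (\<lambda>s. Efun p t s * (\<bar>q s\<bar> / \<omega>) * \<bar>x s\<bar>)"
proof -
  have "norm (integral {0..t} (\<lambda>s. Efun p t s * q s * (sin (\<omega> * (t - s)) / \<omega>) * x s))
      \<le> integral {0..t} (\<lambda>s. Efun p t s * (\<bar>q s\<bar> / \<omega>) * \<bar>x s\<bar>)"
  proof (rule integral_norm_bound_integral)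
    fix s assume "s \<in> {0..t}"
    have "\<bar>q s\<bar> * \<bar>sin (\<omega> * (t - s))\<bar> \<le> \<bar>q s\<bar>"
      by (rule mult_right_le_one_le) auto
    then show "norm (Efun p t s * q s * (sin (\<omega> * (t - s)) / \<omega>) * x s) \<le> Efun p t s * (\<bar>q s\<bar> / \<omega>) * \<bar>x s\<bar>"
      using Efun_pos[of t s] omega_pos
      by (simp add: abs_mult divide_right_mono mult_left_mono mult_right_mono)
  qed (use omega_pos in \<open>auto intro!: integrable_continuous_interval continuous_intros\<close>)
  then show ?thesis
    using x_representation[OF t] unfolding real_norm_def by linarith
qed

lemma x_tendsto_zero:
  assumes y: "(y \<longlongrightarrow> 0) at_top"
    and U: "((\<lambda>t. integral {0..t} (\<lambda>s. Efun p t s * L1 \<omega> t s * y s)) \<longlongrightarrow> 0) at_top"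
  shows "(x \<longlongrightarrow> 0) at_top"
proof -
  define h where "h t = \<bar>integral {0..t} (\<lambda>s. Efun p t s * L1 \<omega> t s * y s)
      - integral {0..t} (\<lambda>s. Efun p t s * p s * (sin (\<omega> * (t - s)) / \<omega>) * y s) / 2\<bar>" for t
  have h: "(h \<longlongrightarrow> 0) at_top"
    using tendsto_diff[OF U y_remainders_tendsto_zero(1)[OF y]] unfolding h_def
    by (intro tendsto_rabs_zero) simp
  interpret fading_volterra_inequality "Efun p" "\<lambda>s. \<bar>q s\<bar> / \<omega>" "\<lambda>t. \<bar>x t\<bar>" h "q_bound / \<omega>"
  proof (rule fading_volterra_inequality.intro[OF Efun.fading_kernel_axioms], unfold_locales)
    show "integral {0..t} (\<lambda>s. \<bar>q s\<bar> / \<omega>) \<le> q_bound / \<omega>" if "0 \<le> t" for t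
      using integral_abs_q_le[OF that] omega_pos by (simp add: divide_right_mono)
  qed (use omega_pos abs_x_le_volterra h in \<open>auto intro!: continuous_intros simp: h_def\<close>)
  show ?thesis
    using tendsto_zero by (simp add: tendsto_rabs_zero_iff)
qed

lemma x'_tendsto_zero:
  assumes x: "(x \<longlongrightarrow> 0) at_top" and y: "(y \<longlongrightarrow> 0) at_top"
    and V: "((\<lambda>t. integral {0..t} (\<lambda>s. Efun p t s * L2 \<omega> t s * y s)) \<longlongrightarrow> 0) at_top"
  shows "(x' \<longlongrightarrow> 0) at_top"
proof (rule Lim_transform_eventually)
  show "((\<lambda>t. y t - p t * x t / 2 + integral {0..t} (\<lambda>s. Efun p t s * L2 \<omega> t s * y s)
      - integral {0..t} (\<lambda>s. Efun p t s * p s * cos (\<omega> * (t - s)) * y s) / 2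
      + integral {0..t} (\<lambda>s. Efun p t s * q s * cos (\<omega> * (t - s)) * x s)) \<longlongrightarrow> 0) at_top"
    using tendsto_add[OF tendsto_diff[OF tendsto_add[OF tendsto_diff[OF y
        tendsto_divide_zero[OF p_mult_tendsto_zero[OF x]]] V] y_remainders_tendsto_zero(2)[OF y]]
        x_remainders_tendsto_zero(2)[OF x]] by simp
  show "\<forall>\<^sub>F t in at_top. y t - p t * x t / 2 + integral {0..t} (\<lambda>s. Efun p t s * L2 \<omega> t s * y s)
      - integral {0..t} (\<lambda>s. Efun p t s * p s * cos (\<omega> * (t - s)) * y s) / 2
      + integral {0..t} (\<lambda>s. Efun p t s * q s * cos (\<omega> * (t - s)) * x s) = x' t"
    using eventually_ge_at_top[of 0]
  proof eventually_elim
    case (elim t)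
    show ?case using x'_representation[OF elim] by linarith
  qed
qed

end

theorem mainTheorem10:
  fixes \<omega> :: real and p p' f x x' :: "real \<Rightarrow> real"
  assumes omega_pos: "\<omega> > 0"
    and p_deriv: "\<And>t. t \<ge> 0 \<Longrightarrow> (p has_real_derivative p' t) (at t within {0..})"
    and p'_cont: "continuous_on {0..} p'"
    and p_pos: "\<And>t. t \<ge> 0 \<Longrightarrow> p t > 0"
    and p'_neg: "\<And>t. t \<ge> 0 \<Longrightarrow> p' t < 0"
    and p_int_infty: "filterlim (\<lambda>t. integral {0..t} p) at_top at_top"
    and p_sq_int: "(\<lambda>t. (p t)^2) integrable_on {0..}"
    and f_loc: "\<And>t. t \<ge> 0 \<Longrightarrow> f absolutely_integrable_on {0..t}"
    and x_deriv: "\<And>t. t \<ge> 0 \<Longrightarrow> (x has_real_derivative x' t) (at t within {0..})"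
    and x'_cont: "continuous_on {0..} x'"
    and x_ode: "\<And>t. t \<ge> 0 \<Longrightarrow>
       ((\<lambda>s. f s - p s * x' s - \<omega>^2 * x s) has_integral (x' t - x' 0)) {0..t}"
    and x0: "x 0 = 0" and x'0: "x' 0 = 0"
  shows "((y1 \<omega> f \<longlongrightarrow> 0) at_top
          \<and> ((\<lambda>t. integral {0..t} (\<lambda>s. Efun p t s * L1 \<omega> t s * y1 \<omega> f s)) \<longlongrightarrow> 0) at_top
          \<and> ((\<lambda>t. integral {0..t} (\<lambda>s. Efun p t s * L2 \<omega> t s * y1 \<omega> f s)) \<longlongrightarrow> 0) at_top)
     \<longleftrightarrow> ((x \<longlongrightarrow> 0) at_top \<and> (x' \<longlongrightarrow> 0) at_top)"
proof -
  interpret damped_oscillator \<omega> p p' f x x'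
    by unfold_locales fact+
  show ?thesis
    using tendsto_zero_if_solution_tendsto_zero x_tendsto_zero x'_tendsto_zero by blast
qed

end
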